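(* Let $r>0$ and assume $W$ satisfies (H). Let $u$ be a local minimizer of $\mathcal{E}$ with $\lim_{x\to\pm\infty}u(x)=\pm1$. Then $u$ is also a local minimizer of $\mathcal{F}$, i.e. for all $a<b$ and all $v\in L^\infty_{\rm loc}(\mathbb{R})$ with $v=u$ a.e. outside $[a+r,b-r]$, $\mathcal{F}_{(a,b)}(u)\le\mathcal{F}_{(a,b)}(v)$.
   Context: For $a<b$ and $u\in L^\infty_{\rm loc}(\mathbb{R})$: $\mathcal{F}_{(a,b)}(u):=\frac1{2r^2}\int_a^b(u(x+r)-u(x-r))^2dx+\int_a^bW(u(x))dx$ and $\mathcal{E}_{(a,b)}(u):=\frac1{2r^2}\int_a^b(\operatorname{osc}_{(x-r,x+r)}u)^2dx+\int_a^bW(u(x))dx$, with $\operatorname{osc}_I u:=\operatorname{ess\,sup}_I u-\operatorname{ess\,inf}_I u$. $u$ is a local minimizer of $\mathcal{E}$ if $\mathcal{E}_{(a,b)}(u)\le\mathcal{E}_{(a,b)}(v)$ for all $a<b$ and all $v\in L^\infty_{\rm loc}$ with $v=u$ a.e. outside $[a+r,b-r]$. Assumption (H): $W\in C(\mathbb{R})$, $W(\pm1)=0<W(t)$ for $t\ne\pm1$; $W$ strictly decreasing on $(-\infty,-1)$, strictly increasing on $(1,\infty)$; $W$ even on $[-1,1]$ with unique local maximum in $[-1,1]$ at $0$. *)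

theory Defs
  imports "HOL-Analysis.Analysis"
begin

text \<open>Locally essentially bounded, Lebesgue measurable functions (representatives of
  elements of L-infinity-loc of the real line).\<close>
definition Linfty_loc :: "(real \<Rightarrow> real) set" where
  "Linfty_loc = {u. u \<in> borel_measurable lebesgue \<and>
     (\<forall>a b. \<exists>C. AE x in lebesgue. x \<in> {a..b} \<longrightarrow> \<bar>u x\<bar> \<le> C)}"

definition ess_sup_on :: "real set \<Rightarrow> (real \<Rightarrow> real) \<Rightarrow> real" where
  "ess_sup_on I u = Inf {c. AE y in lebesgue. y \<in> I \<longrightarrow> u y \<le> c}"

definition ess_inf_on :: "real set \<Rightarrow> (real \<Rightarrow> real) \<Rightarrow> real" where
  "ess_inf_on I u = Sup {c. AE y in lebesgue. y \<in> I \<longrightarrow> c \<le> u y}"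

definition osc_on :: "real set \<Rightarrow> (real \<Rightarrow> real) \<Rightarrow> real" where
  "osc_on I u = ess_sup_on I u - ess_inf_on I u"

definition Fen :: "real \<Rightarrow> (real \<Rightarrow> real) \<Rightarrow> real \<Rightarrow> real \<Rightarrow> (real \<Rightarrow> real) \<Rightarrow> real" where
  "Fen r W a b u =
     1 / (2 * r\<^sup>2) * (LINT x:{a..b}|lebesgue. (u (x + r) - u (x - r))\<^sup>2)
     + (LINT x:{a..b}|lebesgue. W (u x))"

definition Een :: "real \<Rightarrow> (real \<Rightarrow> real) \<Rightarrow> real \<Rightarrow> real \<Rightarrow> (real \<Rightarrow> real) \<Rightarrow> real" where
  "Een r W a b u =
     1 / (2 * r\<^sup>2) * (LINT x:{a..b}|lebesgue. (osc_on {x - r<..<x + r} u)\<^sup>2)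
     + (LINT x:{a..b}|lebesgue. W (u x))"

definition local_minimizer ::
  "(real \<Rightarrow> real \<Rightarrow> (real \<Rightarrow> real) \<Rightarrow> real) \<Rightarrow> real \<Rightarrow> (real \<Rightarrow> real) \<Rightarrow> bool" where
  "local_minimizer En r u \<longleftrightarrow>
     (\<forall>a b v. a < b \<longrightarrow> v \<in> Linfty_loc \<longrightarrow>
        (AE x in lebesgue. x \<notin> {a + r..b - r} \<longrightarrow> v x = u x) \<longrightarrow>
        En a b u \<le> En a b v)"

definition local_max_on :: "real set \<Rightarrow> (real \<Rightarrow> real) \<Rightarrow> real \<Rightarrow> bool" where
  "local_max_on S W t \<longleftrightarrow> t \<in> S \<and>
     (\<exists>d>0. \<forall>s\<in>S. \<bar>s - t\<bar> < d \<longrightarrow> W s \<le> W t)"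

definition hyp_H :: "(real \<Rightarrow> real) \<Rightarrow> bool" where
  "hyp_H W \<longleftrightarrow> continuous_on UNIV W \<and> W (-1) = 0 \<and> W 1 = 0 \<and>
     (\<forall>t. t \<noteq> 1 \<and> t \<noteq> -1 \<longrightarrow> W t > 0) \<and>
     strict_antimono_on {..<-1} W \<and> strict_mono_on {1<..} W \<and>
     (\<forall>t\<in>{-1..1}. W (-t) = W t) \<and>
     (\<forall>t\<in>{-1..1}. local_max_on {-1..1} W t \<longleftrightarrow> t = 0)"

end

theory Submission
  imports Defs
begin

text \<open>
  For a.e. \<open>y\<close>, \<open>u y\<close> is bounded by the essential supremum of \<open>u\<close> over the windows
  \<open>(y - 2r, y)\<close> and \<open>(y, y + 2r)\<close>; applied to \<open>u\<close> and \<open>-u\<close> at \<open>y = x \<plusminus> r\<close> this gives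
  \<open>|u(x + r) - u(x - r)| \<le> osc u\<close> on \<open>(x - r, x + r)\<close> a.e., hence \<open>F \<le> E\<close>.

  Conversely, let \<open>v\<close> compete with \<open>u\<close> for \<open>F\<close>. Sample \<open>v\<close> on the grid \<open>t + P + 2r\<nat>\<close> and
  extend the samples to a staircase that is constant on cells of length \<open>2r\<close> and equal to \<open>u\<close>
  beyond the grid, where \<open>u\<close> is within \<open>\<epsilon>\<close> of \<open>\<plusminus>1\<close>. A window of length \<open>2r\<close> meets at most
  two cells, so the oscillation term of \<open>E\<close> of the staircase is bounded by the squared increments
  of consecutive samples. Averaging over the shift \<open>t \<in> [0, 2r]\<close> turns the sums over the grid
  into the integrals defining \<open>F(v)\<close>. Since \<open>u\<close> minimizes \<open>E\<close>, this yields
  \<open>F(u) \<le> E(u) \<le> F(v) + error\<close> on a large interval containing \<open>(a, b)\<close>, on which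
  \<open>F(u) - F(v)\<close> is the same as on \<open>(a, b)\<close>; the error vanishes as the grid is pushed out
  to \<open>\<plusminus>\<infinity>\<close>.
\<close>

section \<open>Null sets and locally bounded functions\<close>

lemma AE_lebesgue_iff_negligible: "(AE x in lebesgue. P x) \<longleftrightarrow> negligible {x. \<not> P x}"
  by (metis eventually_ae_filter_negligible negligible_subset order_refl)

lemma AE_lebesgue_translate:
  assumes "AE y in lebesgue. P y"
  shows "AE x in lebesgue. P (x + c)"
proof -
  have "negligible ((+) (- c) ` {y. \<not> P y})"
    using assms by (intro negligible_translation) (simp add: AE_lebesgue_iff_negligible)
  moreover have "{x. \<not> P (x + c)} = (+) (- c) ` {y. \<not> P y}"
    by (force simp: image_iff)
  ultimately show ?thesis
    by (simp only: AE_lebesgue_iff_negligible)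
qed

lemma AE_lebesgue_neq: "AE x in lebesgue. x \<noteq> (p::real)"
  by (simp add: AE_lebesgue_iff_negligible)

lemma borel_measurable_lebesgue_translate:
  fixes u :: "real \<Rightarrow> real"
  assumes "u \<in> borel_measurable lebesgue"
  shows "(\<lambda>x. u (x + c)) \<in> borel_measurable lebesgue"
proof -
  have "(\<lambda>x::real. x + c) \<in> lebesgue \<rightarrow>\<^sub>M lebesgue"
    using lebesgue_affine_measurable[where c="\<lambda>x::real. 1" and t=c] by (simp add: add.commute)
  from measurable_compose[OF this assms] show ?thesis by simp
qed

lemma Linfty_locI:
  assumes "f \<in> borel_measurable lebesgue"
    and "\<And>a b. \<exists>C. AE x in lebesgue. x \<in> {a..b} \<longrightarrow> \<bar>f x\<bar> \<le> C"
  shows "f \<in> Linfty_loc"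
  using assms unfolding Linfty_loc_def by auto

lemma Linfty_locD:
  assumes "f \<in> Linfty_loc"
  shows "f \<in> borel_measurable lebesgue"
    and "\<exists>C. AE x in lebesgue. x \<in> {a..b} \<longrightarrow> \<bar>f x\<bar> \<le> C"
  using assms unfolding Linfty_loc_def by auto

lemma Linfty_loc_const: "(\<lambda>x. k) \<in> Linfty_loc"
  by (rule Linfty_locI) (auto intro!: exI[of _ "\<bar>k\<bar>"])

lemma Linfty_loc_translate:
  assumes "f \<in> Linfty_loc"
  shows "(\<lambda>x. f (x + c)) \<in> Linfty_loc"
proof (rule Linfty_locI)
  show "(\<lambda>x. f (x + c)) \<in> borel_measurable lebesgue"
    by (rule borel_measurable_lebesgue_translate[OF Linfty_locD(1)[OF assms]])
  fix a b
  obtain C where "AE x in lebesgue. x \<in> {a+c..b+c} \<longrightarrow> \<bar>f x\<bar> \<le> C"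
    using Linfty_locD(2)[OF assms] by blast
  from AE_lebesgue_translate[OF this, of c]
  show "\<exists>C. AE x in lebesgue. x \<in> {a..b} \<longrightarrow> \<bar>f (x + c)\<bar> \<le> C"
    by (auto elim!: eventually_mono)
qed

lemma Linfty_loc_add:
  assumes "f \<in> Linfty_loc" "g \<in> Linfty_loc"
  shows "(\<lambda>x. f x + g x) \<in> Linfty_loc"
proof (rule Linfty_locI)
  show "(\<lambda>x. f x + g x) \<in> borel_measurable lebesgue"
    using assms by (intro borel_measurable_add Linfty_locD(1))
  fix a b
  obtain C D where "AE x in lebesgue. x \<in> {a..b} \<longrightarrow> \<bar>f x\<bar> \<le> C"
    and "AE x in lebesgue. x \<in> {a..b} \<longrightarrow> \<bar>g x\<bar> \<le> D"
    using Linfty_locD(2) assms by meson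
  then have "AE x in lebesgue. x \<in> {a..b} \<longrightarrow> \<bar>f x + g x\<bar> \<le> C + D"
    by eventually_elim auto
  then show "\<exists>C. AE x in lebesgue. x \<in> {a..b} \<longrightarrow> \<bar>f x + g x\<bar> \<le> C" ..
qed

lemma Linfty_loc_mult:
  assumes "f \<in> Linfty_loc" "g \<in> Linfty_loc"
  shows "(\<lambda>x. f x * g x) \<in> Linfty_loc"
proof (rule Linfty_locI)
  show "(\<lambda>x. f x * g x) \<in> borel_measurable lebesgue"
    using assms by (intro borel_measurable_times Linfty_locD(1))
  fix a b
  obtain C D where "AE x in lebesgue. x \<in> {a..b} \<longrightarrow> \<bar>f x\<bar> \<le> C"
    and "AE x in lebesgue. x \<in> {a..b} \<longrightarrow> \<bar>g x\<bar> \<le> D"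
    using Linfty_locD(2) assms by meson
  then have "AE x in lebesgue. x \<in> {a..b} \<longrightarrow> \<bar>f x * g x\<bar> \<le> C * D"
    by eventually_elim (auto simp: abs_mult intro: mult_mono')
  then show "\<exists>C. AE x in lebesgue. x \<in> {a..b} \<longrightarrow> \<bar>f x * g x\<bar> \<le> C" ..
qed

lemma Linfty_loc_diff:
  assumes "f \<in> Linfty_loc" "g \<in> Linfty_loc"
  shows "(\<lambda>x. f x - g x) \<in> Linfty_loc"
  using Linfty_loc_add[OF assms(1) Linfty_loc_mult[OF Linfty_loc_const[of "-1"] assms(2)]] by simp

lemma Linfty_loc_uminus: "f \<in> Linfty_loc \<Longrightarrow> (\<lambda>x. - f x) \<in> Linfty_loc"
  using Linfty_loc_diff[OF Linfty_loc_const, of f 0] by simp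

lemma Linfty_loc_power2: "f \<in> Linfty_loc \<Longrightarrow> (\<lambda>x. (f x)\<^sup>2) \<in> Linfty_loc"
  using Linfty_loc_mult by (simp add: power2_eq_square)

lemma Linfty_loc_sum:
  "finite I \<Longrightarrow> (\<And>i. i \<in> I \<Longrightarrow> f i \<in> Linfty_loc) \<Longrightarrow> (\<lambda>x. \<Sum>i\<in>I. f i x) \<in> Linfty_loc"
  by (induction I rule: finite_induct) (auto intro: Linfty_loc_const Linfty_loc_add)

lemma Linfty_loc_compose:
  assumes "f \<in> Linfty_loc" "continuous_on UNIV W"
  shows "(\<lambda>x. W (f x)) \<in> Linfty_loc"
proof (rule Linfty_locI)
  show "(\<lambda>x. W (f x)) \<in> borel_measurable lebesgue"
    using measurable_compose[OF Linfty_locD(1)[OF assms(1)] borel_measurable_continuous_onI[OF assms(2)]] .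
  fix a b
  obtain C where C: "AE x in lebesgue. x \<in> {a..b} \<longrightarrow> \<bar>f x\<bar> \<le> C"
    using Linfty_locD(2)[OF assms(1)] by blast
  have "bounded (W ` {-C..C})"
    by (intro compact_imp_bounded compact_continuous_image continuous_on_subset[OF assms(2)]) auto
  then obtain K where "\<forall>y\<in>W ` {-C..C}. \<bar>y\<bar> \<le> K"
    unfolding bounded_real by blast
  then have "\<bar>W s\<bar> \<le> K" if "\<bar>s\<bar> \<le> C" for s
    using that by (simp add: abs_le_iff)
  with C have "AE x in lebesgue. x \<in> {a..b} \<longrightarrow> \<bar>W (f x)\<bar> \<le> K"
    by (auto elim!: eventually_mono)
  then show "\<exists>C. AE x in lebesgue. x \<in> {a..b} \<longrightarrow> \<bar>W (f x)\<bar> \<le> C" ..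
qed

lemma Linfty_loc_set_integrable:
  assumes "f \<in> Linfty_loc"
  shows "set_integrable lebesgue {a..b} f"
proof -
  obtain C where C: "AE x in lebesgue. x \<in> {a..b} \<longrightarrow> \<bar>f x\<bar> \<le> C"
    using Linfty_locD(2)[OF assms] by blast
  show ?thesis
  proof (rule set_integrable_bound[where f="\<lambda>_. C"])
    show "set_integrable lebesgue {a..b} (\<lambda>_. C)"
      by (rule absolutely_integrable_continuous_real) simp
    show "set_borel_measurable lebesgue {a..b} f"
      unfolding set_borel_measurable_def
      by (intro borel_measurable_scaleR borel_measurable_indicator Linfty_locD(1)[OF assms]) simp
    show "AE x in lebesgue. x \<in> {a..b} \<longrightarrow> norm (f x) \<le> norm C"
      using C by eventually_elim auto
  qed
qed

lemma Linfty_loc_integrable_on: "f \<in> Linfty_loc \<Longrightarrow> f integrable_on {a..b}"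
  using set_lebesgue_integral_eq_integral(1)[OF Linfty_loc_set_integrable] .

lemma Linfty_loc_set_lebesgue_integral:
  "f \<in> Linfty_loc \<Longrightarrow> (LINT x:{a..b}|lebesgue. f x) = integral {a..b} f"
  using set_lebesgue_integral_eq_integral(2)[OF Linfty_loc_set_integrable] .

section \<open>Essential suprema and oscillation on bounded intervals\<close>

lemma Linfty_loc_bounded_on:
  assumes "u \<in> Linfty_loc" "I \<subseteq> {\<alpha>..\<beta>}"
  obtains C where "AE y in lebesgue. y \<in> I \<longrightarrow> \<bar>u y\<bar> \<le> C"
proof -
  obtain C where "AE x in lebesgue. x \<in> {\<alpha>..\<beta>} \<longrightarrow> \<bar>u x\<bar> \<le> C"
    using Linfty_locD(2)[OF assms(1)] by blast
  with assms(2) have "AE y in lebesgue. y \<in> I \<longrightarrow> \<bar>u y\<bar> \<le> C"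
    by (auto elim!: eventually_mono)
  then show ?thesis by (rule that)
qed

lemma AE_bounds_on_interval_ordered:
  fixes \<alpha> \<beta> c1 c2 :: real
  assumes "\<alpha> < \<beta>"
    and "AE y in lebesgue. y \<in> {\<alpha><..<\<beta>} \<longrightarrow> u y \<le> c1"
    and "AE y in lebesgue. y \<in> {\<alpha><..<\<beta>} \<longrightarrow> c2 \<le> u y"
  shows "c2 \<le> c1"
proof (rule ccontr)
  assume "\<not> c2 \<le> c1"
  from assms(2,3) have "AE y in lebesgue. y \<notin> {\<alpha><..<\<beta>}"
    by eventually_elim (use \<open>\<not> c2 \<le> c1\<close> in auto)
  then have "negligible {\<alpha><..<\<beta>}"
    by (simp add: AE_lebesgue_iff_negligible greaterThanLessThan_def greaterThan_def lessThan_def Int_def)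
  with assms(1) show False
    using open_not_negligible[of "{\<alpha><..<\<beta>}"] by simp
qed

lemma ess_sup_on_le:
  assumes "u \<in> Linfty_loc" "\<alpha> < \<beta>"
    and "AE y in lebesgue. y \<in> {\<alpha><..<\<beta>} \<longrightarrow> u y \<le> c"
  shows "ess_sup_on {\<alpha><..<\<beta>} u \<le> c"
proof -
  obtain C where "AE y in lebesgue. y \<in> {\<alpha><..<\<beta>} \<longrightarrow> \<bar>u y\<bar> \<le> C"
    by (rule Linfty_loc_bounded_on[OF assms(1), of "{\<alpha><..<\<beta>}" \<alpha> \<beta>]) auto
  then have lower: "AE y in lebesgue. y \<in> {\<alpha><..<\<beta>} \<longrightarrow> - C \<le> u y"
    by (auto elim!: eventually_mono)
  have "bdd_below {c. AE y in lebesgue. y \<in> {\<alpha><..<\<beta>} \<longrightarrow> u y \<le> c}"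
    using AE_bounds_on_interval_ordered[OF assms(2) _ lower] by (intro bdd_belowI) blast
  then show ?thesis
    unfolding ess_sup_on_def by (rule cInf_lower[rotated]) (use assms(3) in simp)
qed

lemma ess_sup_on_ge:
  assumes "u \<in> Linfty_loc" "I \<subseteq> {\<alpha>..\<beta>}"
    and "\<not> (AE y in lebesgue. y \<in> I \<longrightarrow> u y \<le> c)"
  shows "c \<le> ess_sup_on I u"
  unfolding ess_sup_on_def
proof (rule cInf_greatest)
  obtain C where "AE y in lebesgue. y \<in> I \<longrightarrow> \<bar>u y\<bar> \<le> C"
    using Linfty_loc_bounded_on[OF assms(1,2)] .
  then have "AE y in lebesgue. y \<in> I \<longrightarrow> u y \<le> C"
    by (rule eventually_mono) auto
  then have "C \<in> {c. AE y in lebesgue. y \<in> I \<longrightarrow> u y \<le> c}"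
    by simp
  then show "{c. AE y in lebesgue. y \<in> I \<longrightarrow> u y \<le> c} \<noteq> {}"
    by blast
  fix e assume e: "e \<in> {c. AE y in lebesgue. y \<in> I \<longrightarrow> u y \<le> c}"
  show "c \<le> e"
  proof (rule ccontr)
    assume "\<not> c \<le> e"
    from e have "AE y in lebesgue. y \<in> I \<longrightarrow> u y \<le> e"
      by simp
    then have "AE y in lebesgue. y \<in> I \<longrightarrow> u y \<le> c"
      by eventually_elim (use \<open>\<not> c \<le> e\<close> in auto)
    with assms(3) show False ..
  qed
qed

lemma ess_sup_on_lessE:
  assumes "u \<in> Linfty_loc" "I \<subseteq> {\<alpha>..\<beta>}" "ess_sup_on I u < q"
  obtains e where "e < q" "AE y in lebesgue. y \<in> I \<longrightarrow> u y \<le> e"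
proof -
  obtain e where "ess_sup_on I u < e" "e < q"
    using dense[OF assms(3)] by blast
  then have "AE y in lebesgue. y \<in> I \<longrightarrow> u y \<le> e"
    using ess_sup_on_ge[OF assms(1,2), of e] by linarith
  with \<open>e < q\<close> show ?thesis by (rule that)
qed

lemma ess_inf_on_eq_uminus_ess_sup_on: "ess_inf_on I u = - ess_sup_on I (\<lambda>y. - u y)"
proof -
  have "{c. AE y in lebesgue. y \<in> I \<longrightarrow> - u y \<le> c} = uminus ` {c. AE y in lebesgue. y \<in> I \<longrightarrow> c \<le> u y}"
  proof (intro equalityI subsetI)
    fix c assume "c \<in> {c. AE y in lebesgue. y \<in> I \<longrightarrow> - u y \<le> c}"
    then have "AE y in lebesgue. y \<in> I \<longrightarrow> - u y \<le> c"
      by simp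
    then have "AE y in lebesgue. y \<in> I \<longrightarrow> - c \<le> u y"
      by eventually_elim auto
    then show "c \<in> uminus ` {c. AE y in lebesgue. y \<in> I \<longrightarrow> c \<le> u y}"
      by (intro rev_image_eqI[of "- c"]) simp_all
  next
    fix c assume "c \<in> uminus ` {c. AE y in lebesgue. y \<in> I \<longrightarrow> c \<le> u y}"
    then obtain d where "c = - d" "AE y in lebesgue. y \<in> I \<longrightarrow> d \<le> u y"
      by blast
    from this(2) have "AE y in lebesgue. y \<in> I \<longrightarrow> - u y \<le> c"
      by eventually_elim (auto simp: \<open>c = - d\<close>)
    then show "c \<in> {c. AE y in lebesgue. y \<in> I \<longrightarrow> - u y \<le> c}"
      by simp
  qed
  then show ?thesis
    unfolding ess_inf_on_def ess_sup_on_def Inf_real_def by (simp add: image_image)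
qed

lemma ess_inf_on_ge:
  assumes "u \<in> Linfty_loc" "\<alpha> < \<beta>"
    and "AE y in lebesgue. y \<in> {\<alpha><..<\<beta>} \<longrightarrow> c \<le> u y"
  shows "c \<le> ess_inf_on {\<alpha><..<\<beta>} u"
proof -
  from assms(3) have "AE y in lebesgue. y \<in> {\<alpha><..<\<beta>} \<longrightarrow> - u y \<le> - c"
    by (rule eventually_mono) simp
  from ess_sup_on_le[OF Linfty_loc_uminus[OF assms(1)] assms(2) this] show ?thesis
    by (simp add: ess_inf_on_eq_uminus_ess_sup_on)
qed

lemma ess_inf_on_le_ess_sup_on:
  assumes "u \<in> Linfty_loc" "\<alpha> < \<beta>"
  shows "ess_inf_on {\<alpha><..<\<beta>} u \<le> ess_sup_on {\<alpha><..<\<beta>} u"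
proof -
  obtain C where "AE y in lebesgue. y \<in> {\<alpha><..<\<beta>} \<longrightarrow> \<bar>u y\<bar> \<le> C"
    by (rule Linfty_loc_bounded_on[OF assms(1), of "{\<alpha><..<\<beta>}" \<alpha> \<beta>]) auto
  then have "AE y in lebesgue. y \<in> {\<alpha><..<\<beta>} \<longrightarrow> u y \<le> C"
    and "AE y in lebesgue. y \<in> {\<alpha><..<\<beta>} \<longrightarrow> - C \<le> u y"
    by (eventually_elim, auto)+
  then have upper: "C \<in> {c. AE y in lebesgue. y \<in> {\<alpha><..<\<beta>} \<longrightarrow> u y \<le> c}"
    and lower: "- C \<in> {c. AE y in lebesgue. y \<in> {\<alpha><..<\<beta>} \<longrightarrow> c \<le> u y}"
    by simp_all
  show ?thesis
    unfolding ess_inf_on_def ess_sup_on_def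
  proof (rule cSup_least)
    fix c2 assume "c2 \<in> {c. AE y in lebesgue. y \<in> {\<alpha><..<\<beta>} \<longrightarrow> c \<le> u y}"
    then show "c2 \<le> Inf {c. AE y in lebesgue. y \<in> {\<alpha><..<\<beta>} \<longrightarrow> u y \<le> c}"
      using upper AE_bounds_on_interval_ordered[OF assms(2)] by (intro cInf_greatest) blast+
  qed (use lower in blast)
qed

lemma osc_on_nonneg:
  assumes "u \<in> Linfty_loc" "\<alpha> < \<beta>"
  shows "0 \<le> osc_on {\<alpha><..<\<beta>} u"
  using ess_inf_on_le_ess_sup_on[OF assms] by (simp add: osc_on_def)

lemma osc_on_le:
  assumes "u \<in> Linfty_loc" "\<alpha> < \<beta>"
    and "AE y in lebesgue. y \<in> {\<alpha><..<\<beta>} \<longrightarrow> u y \<le> c1"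
    and "AE y in lebesgue. y \<in> {\<alpha><..<\<beta>} \<longrightarrow> c2 \<le> u y"
  shows "osc_on {\<alpha><..<\<beta>} u \<le> c1 - c2"
  using ess_sup_on_le[OF assms(1-3)] ess_inf_on_ge[OF assms(1,2,4)] by (simp add: osc_on_def)

lemma osc_on_power2_le:
  assumes "u \<in> Linfty_loc" "\<alpha> < \<beta>" "0 \<le> e"
    and "AE y in lebesgue. y \<in> {\<alpha><..<\<beta>} \<longrightarrow> \<bar>u y - s\<bar> \<le> e \<or> u y = d"
  shows "(osc_on {\<alpha><..<\<beta>} u)\<^sup>2 \<le> (\<bar>d - s\<bar> + 2 * e)\<^sup>2"
proof -
  from assms(4) have "AE y in lebesgue. y \<in> {\<alpha><..<\<beta>} \<longrightarrow> u y \<le> max (s + e) d"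
    and "AE y in lebesgue. y \<in> {\<alpha><..<\<beta>} \<longrightarrow> min (s - e) d \<le> u y"
    by (eventually_elim, auto)+
  from osc_on_le[OF assms(1,2) this] have "osc_on {\<alpha><..<\<beta>} u \<le> \<bar>d - s\<bar> + 2 * e"
    using assms(3) by linarith
  with osc_on_nonneg[OF assms(1,2)] show ?thesis
    by (simp add: power_mono)
qed

lemma not_AE_le_on_closed_subinterval:
  fixes \<alpha> \<beta> c :: real
  assumes "\<not> (AE y in lebesgue. y \<in> {\<alpha><..<\<beta>} \<longrightarrow> u y \<le> c)"
  obtains d where "d > 0" "\<not> (AE y in lebesgue. y \<in> {\<alpha> + d..\<beta> - d} \<longrightarrow> u y \<le> c)"
proof -
  have "\<exists>n. \<not> (AE y in lebesgue. y \<in> {\<alpha> + 1 / Suc n..\<beta> - 1 / Suc n} \<longrightarrow> u y \<le> c)"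
  proof (rule ccontr)
    assume "\<not> ?thesis"
    then have "\<forall>n. AE y in lebesgue. y \<in> {\<alpha> + 1 / Suc n..\<beta> - 1 / Suc n} \<longrightarrow> u y \<le> c"
      by blast
    then have "AE y in lebesgue. \<forall>n. y \<in> {\<alpha> + 1 / Suc n..\<beta> - 1 / Suc n} \<longrightarrow> u y \<le> c"
      by (rule AE_all_countable[THEN iffD2])
    then have "AE y in lebesgue. y \<in> {\<alpha><..<\<beta>} \<longrightarrow> u y \<le> c"
    proof eventually_elim
      case (elim y)
      show ?case
      proof
        assume "y \<in> {\<alpha><..<\<beta>}"
        then have "0 < min (y - \<alpha>) (\<beta> - y)"
          by simp
        then obtain n where "inverse (real (Suc n)) < min (y - \<alpha>) (\<beta> - y)"
          using reals_Archimedean by blast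
        then have "y \<in> {\<alpha> + 1 / Suc n..\<beta> - 1 / Suc n}"
          by (simp add: field_simps)
        with elim show "u y \<le> c" by blast
      qed
    qed
    with assms show False ..
  qed
  then show ?thesis
    using that[of "1 / Suc _"] by auto
qed

lemma open_ess_sup_on_window_superlevel:
  assumes "u \<in> Linfty_loc" "\<alpha> < \<beta>"
  shows "open {x. c < ess_sup_on {x + \<alpha><..<x + \<beta>} u}"
  unfolding open_dist
proof (intro ballI)
  fix x0 assume "x0 \<in> {x. c < ess_sup_on {x + \<alpha><..<x + \<beta>} u}"
  then obtain c' where c': "c < c'" "c' < ess_sup_on {x0 + \<alpha><..<x0 + \<beta>} u"
    using dense by auto
  then have "\<not> (AE y in lebesgue. y \<in> {x0 + \<alpha><..<x0 + \<beta>} \<longrightarrow> u y \<le> c')"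
    using ess_sup_on_le[OF assms(1), of "x0 + \<alpha>" "x0 + \<beta>"] assms(2) by force
  then obtain d where d: "d > 0"
    and not_AE: "\<not> (AE y in lebesgue. y \<in> {x0 + \<alpha> + d..x0 + \<beta> - d} \<longrightarrow> u y \<le> c')"
    by (rule not_AE_le_on_closed_subinterval)
  have "c' \<le> ess_sup_on {x + \<alpha><..<x + \<beta>} u" if "dist x x0 < d" for x
  proof (rule ess_sup_on_ge[OF assms(1), of _ "x + \<alpha>" "x + \<beta>"])
    show "\<not> (AE y in lebesgue. y \<in> {x + \<alpha><..<x + \<beta>} \<longrightarrow> u y \<le> c')"
    proof
      assume "AE y in lebesgue. y \<in> {x + \<alpha><..<x + \<beta>} \<longrightarrow> u y \<le> c'"
      then have "AE y in lebesgue. y \<in> {x0 + \<alpha> + d..x0 + \<beta> - d} \<longrightarrow> u y \<le> c'"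
        by eventually_elim (use that in \<open>auto simp: dist_real_def\<close>)
      with not_AE show False ..
    qed
  qed auto
  with c' d show "\<exists>e>0. \<forall>x. dist x x0 < e \<longrightarrow> x \<in> {x. c < ess_sup_on {x + \<alpha><..<x + \<beta>} u}"
    by force
qed

lemma borel_measurable_ess_sup_on_window:
  assumes "u \<in> Linfty_loc" "\<alpha> < \<beta>"
  shows "(\<lambda>x. ess_sup_on {x + \<alpha><..<x + \<beta>} u) \<in> borel_measurable lebesgue"
  unfolding borel_measurable_iff_greater
  using open_ess_sup_on_window_superlevel[OF assms]
  by (simp add: borel_open sets_completionI_sets)

lemma Linfty_loc_osc_on_window:
  assumes "u \<in> Linfty_loc" "r > 0"
  shows "(\<lambda>x. osc_on {x - r<..<x + r} u) \<in> Linfty_loc"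
proof (rule Linfty_locI)
  have "(\<lambda>x. ess_sup_on {x + - r<..<x + r} u + ess_sup_on {x + - r<..<x + r} (\<lambda>y. - u y))
      \<in> borel_measurable lebesgue"
    using assms by (intro borel_measurable_add borel_measurable_ess_sup_on_window Linfty_loc_uminus) auto
  then show "(\<lambda>x. osc_on {x - r<..<x + r} u) \<in> borel_measurable lebesgue"
    by (simp add: osc_on_def ess_inf_on_eq_uminus_ess_sup_on)
  fix a b
  obtain C where C: "AE x in lebesgue. x \<in> {a - r..b + r} \<longrightarrow> \<bar>u x\<bar> \<le> C"
    using Linfty_locD(2)[OF assms(1)] by blast
  have "\<bar>osc_on {x - r<..<x + r} u\<bar> \<le> 2 * C" if "x \<in> {a..b}" for x
  proof -
    from C have "AE y in lebesgue. y \<in> {x - r<..<x + r} \<longrightarrow> u y \<le> C"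
      and "AE y in lebesgue. y \<in> {x - r<..<x + r} \<longrightarrow> - C \<le> u y"
      by (eventually_elim, use that in auto)+
    moreover have "x - r < x + r"
      using assms(2) by simp
    ultimately show ?thesis
      using osc_on_le[OF assms(1), of "x - r" "x + r" C "- C"] osc_on_nonneg[OF assms(1), of "x - r" "x + r"]
      by simp
  qed
  then show "\<exists>C. AE x in lebesgue. x \<in> {a..b} \<longrightarrow> \<bar>osc_on {x - r<..<x + r} u\<bar> \<le> C"
    by (intro exI AE_I2) auto
qed

section \<open>Point values are dominated by one-sided essential suprema\<close>

lemma negligible_uminus_image:
  fixes S :: "real set"
  assumes "negligible S"
  shows "negligible (uminus ` S)"
  using assms by (intro negligible_differentiable_image_negligible) auto

lemma negligible_if_initial_segments_negligible:
  fixes D :: "real set"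
  assumes "bdd_above D" "\<And>y. y \<in> D \<Longrightarrow> negligible (D \<inter> {..<y})"
  shows "negligible D"
proof -
  have "D \<subseteq> {Sup D} \<union> \<Union> ((\<lambda>q. D \<inter> {..<q}) ` (\<rat> \<inter> {..<Sup D}))"
  proof
    fix z assume z: "z \<in> D"
    show "z \<in> {Sup D} \<union> \<Union> ((\<lambda>q. D \<inter> {..<q}) ` (\<rat> \<inter> {..<Sup D}))"
    proof (cases "z = Sup D")
      case False
      with cSup_upper[OF z assms(1)] have "z < Sup D"
        by simp
      then obtain q where "q \<in> \<rat>" "z < q" "q < Sup D"
        using Rats_dense_in_real by blast
      with z show ?thesis by auto
    qed simp
  qed
  moreover have "negligible (D \<inter> {..<q})" if "q < Sup D" for q
  proof (cases "D = {}")
    case False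
    with that obtain y where "y \<in> D" "q < y"
      by (meson less_cSupE)
    then have "D \<inter> {..<q} \<subseteq> D \<inter> {..<y}"
      by auto
    with assms(2)[OF \<open>y \<in> D\<close>] show ?thesis
      by (rule negligible_subset)
  qed simp
  then have "negligible (\<Union> ((\<lambda>q. D \<inter> {..<q}) ` (\<rat> \<inter> {..<Sup D})))"
    by (intro negligible_countable_Union countable_image countable_Int1 countable_rat) blast
  ultimately show ?thesis
    by (metis negligible_Un negligible_sing negligible_subset)
qed

lemma negligible_if_final_segments_negligible:
  fixes D :: "real set"
  assumes "bdd_below D" "\<And>y. y \<in> D \<Longrightarrow> negligible (D \<inter> {y<..})"
  shows "negligible D"
proof -
  have "negligible (uminus ` D)"
  proof (rule negligible_if_initial_segments_negligible)
    show "bdd_above (uminus ` D)"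
      using assms(1) by (simp add: bdd_above_uminus)
    fix y assume "y \<in> uminus ` D"
    then have "negligible (uminus ` (D \<inter> {- y<..}))"
      using assms(2) negligible_uminus_image by auto
    moreover have "uminus ` (D \<inter> {- y<..}) = uminus ` D \<inter> {..<y}"
      by (force simp: image_iff)
    ultimately show "negligible (uminus ` D \<inter> {..<y})"
      by simp
  qed
  then show ?thesis
    using negligible_uminus_image[of "uminus ` D"] by (simp add: image_image)
qed

lemma negligible_if_negligible_on_cells:
  fixes D :: "real set"
  assumes "\<delta> > 0" "\<And>k::int. negligible (D \<inter> {k * \<delta>..<k * \<delta> + \<delta>})"
  shows "negligible D"
proof -
  have "D \<subseteq> (\<Union>k::int. D \<inter> {k * \<delta>..<k * \<delta> + \<delta>})"
  proof
    fix z assume "z \<in> D"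
    moreover have "\<lfloor>z / \<delta>\<rfloor> * \<delta> \<le> z" "z < \<lfloor>z / \<delta>\<rfloor> * \<delta> + \<delta>"
      using floor_divide_lower[OF assms(1), of z] floor_divide_upper[OF assms(1), of z]
      by (simp_all add: algebra_simps)
    ultimately show "z \<in> (\<Union>k::int. D \<inter> {k * \<delta>..<k * \<delta> + \<delta>})"
      by auto
  qed
  moreover have "negligible (\<Union>k::int. D \<inter> {k * \<delta>..<k * \<delta> + \<delta>})"
    by (intro negligible_countable_Union countable_image) (use assms(2) in auto)
  ultimately show ?thesis
    by (rule negligible_subset[rotated])
qed

lemma negligible_if_left_windows_negligible:
  fixes D :: "real set"
  assumes "\<delta> > 0" "\<And>y. y \<in> D \<Longrightarrow> negligible (D \<inter> {y - \<delta><..<y})"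
  shows "negligible D"
proof (rule negligible_if_negligible_on_cells[OF assms(1)])
  fix k :: int
  show "negligible (D \<inter> {k * \<delta>..<k * \<delta> + \<delta>})"
    by (rule negligible_if_initial_segments_negligible)
       (auto intro: bdd_aboveI negligible_subset[OF assms(2)])
qed

lemma negligible_if_right_windows_negligible:
  fixes D :: "real set"
  assumes "\<delta> > 0" "\<And>y. y \<in> D \<Longrightarrow> negligible (D \<inter> {y<..<y + \<delta>})"
  shows "negligible D"
proof (rule negligible_if_negligible_on_cells[OF assms(1)])
  fix k :: int
  show "negligible (D \<inter> {k * \<delta>..<k * \<delta> + \<delta>})"
    by (rule negligible_if_final_segments_negligible)
       (auto intro: bdd_belowI negligible_subset[OF assms(2)])
qed

lemma AE_le_ess_sup_on_windows:
  fixes u :: "real \<Rightarrow> real" and J :: "real \<Rightarrow> real set"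
  assumes u: "u \<in> Linfty_loc" and bounded: "\<And>y. J y \<subseteq> {y - \<delta>..y + \<delta>}"
    and negligible_J: "\<And>D. (\<And>y. y \<in> D \<Longrightarrow> negligible (D \<inter> J y)) \<Longrightarrow> negligible D"
  shows "AE y in lebesgue. u y \<le> ess_sup_on (J y) u"
proof -
  define A where "A q = {y. ess_sup_on (J y) u < q \<and> q < u y}" for q
  have "negligible (A q)" for q
  proof (rule negligible_J)
    fix y assume "y \<in> A q"
    then obtain e where "e < q" "AE z in lebesgue. z \<in> J y \<longrightarrow> u z \<le> e"
      using ess_sup_on_lessE[OF u bounded] unfolding A_def by blast
    moreover have "A q \<inter> J y \<subseteq> {z. \<not> (z \<in> J y \<longrightarrow> u z \<le> e)}"
      using \<open>e < q\<close> unfolding A_def by auto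
    ultimately show "negligible (A q \<inter> J y)"
      unfolding AE_lebesgue_iff_negligible by (meson negligible_subset)
  qed
  then have "negligible (\<Union> (A ` \<rat>))"
    by (intro negligible_countable_Union countable_image countable_rat) blast
  moreover have "{y. \<not> u y \<le> ess_sup_on (J y) u} \<subseteq> \<Union> (A ` \<rat>)"
    unfolding A_def by (auto simp: not_le dest: Rats_dense_in_real)
  ultimately show ?thesis
    unfolding AE_lebesgue_iff_negligible by (rule negligible_subset)
qed

lemma AE_endpoints_le_ess_sup_on:
  fixes u :: "real \<Rightarrow> real"
  assumes u: "u \<in> Linfty_loc" and "r > 0"
  shows "AE x in lebesgue. u (x + r) \<le> ess_sup_on {x - r<..<x + r} u
    \<and> u (x - r) \<le> ess_sup_on {x - r<..<x + r} u"
proof -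
  have "2 * r > 0"
    using \<open>r > 0\<close> by simp
  have "AE y in lebesgue. u y \<le> ess_sup_on {y - 2 * r<..<y} u"
    by (rule AE_le_ess_sup_on_windows[OF u, of _ "2 * r"])
       (auto intro: negligible_if_left_windows_negligible[OF \<open>2 * r > 0\<close>])
  from AE_lebesgue_translate[OF this, of r]
  have "AE x in lebesgue. u (x + r) \<le> ess_sup_on {x - r<..<x + r} u"
    by (simp add: algebra_simps)
  moreover have "AE y in lebesgue. u y \<le> ess_sup_on {y<..<y + 2 * r} u"
    by (rule AE_le_ess_sup_on_windows[OF u, of _ "2 * r"])
       (auto intro: negligible_if_right_windows_negligible[OF \<open>2 * r > 0\<close>])
  from AE_lebesgue_translate[OF this, of "- r"]
  have "AE x in lebesgue. u (x - r) \<le> ess_sup_on {x - r<..<x + r} u"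
    by (simp add: algebra_simps)
  ultimately show ?thesis
    by eventually_elim blast
qed

lemma AE_abs_diff_endpoints_le_osc_on:
  fixes u :: "real \<Rightarrow> real"
  assumes "u \<in> Linfty_loc" "r > 0"
  shows "AE x in lebesgue. \<bar>u (x + r) - u (x - r)\<bar> \<le> osc_on {x - r<..<x + r} u"
  using AE_endpoints_le_ess_sup_on[OF assms] AE_endpoints_le_ess_sup_on[OF Linfty_loc_uminus[OF assms(1)] assms(2)]
  by eventually_elim (auto simp: osc_on_def ess_inf_on_eq_uminus_ess_sup_on abs_le_iff)

section \<open>Comparison of the energies\<close>

lemma Fen_eq_integral:
  assumes "v \<in> Linfty_loc" "continuous_on UNIV W"
  shows "Fen r W a b v = 1 / (2 * r\<^sup>2) * integral {a..b} (\<lambda>x. (v (x + r) - v (x - r))\<^sup>2)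
     + integral {a..b} (\<lambda>x. W (v x))"
proof -
  have "(\<lambda>x. (v (x + r) - v (x + - r))\<^sup>2) \<in> Linfty_loc"
    using assms(1) by (intro Linfty_loc_power2 Linfty_loc_diff Linfty_loc_translate)
  then show ?thesis
    unfolding Fen_def using Linfty_loc_compose[OF assms]
    by (simp add: Linfty_loc_set_lebesgue_integral)
qed

lemma Een_eq_integral:
  assumes "v \<in> Linfty_loc" "continuous_on UNIV W" "r > 0"
  shows "Een r W a b v = 1 / (2 * r\<^sup>2) * integral {a..b} (\<lambda>x. (osc_on {x - r<..<x + r} v)\<^sup>2)
     + integral {a..b} (\<lambda>x. W (v x))"
  unfolding Een_def
  using Linfty_loc_compose[OF assms(1,2)] Linfty_loc_power2[OF Linfty_loc_osc_on_window[OF assms(1,3)]]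
  by (simp add: Linfty_loc_set_lebesgue_integral)

lemma integral_eq_AE:
  fixes f g :: "real \<Rightarrow> real"
  assumes "AE x in lebesgue. x \<in> S \<longrightarrow> f x = g x"
  shows "integral S f = integral S g"
  using assms unfolding AE_lebesgue_iff_negligible by (rule integral_spike) auto

lemma integral_le_AE:
  fixes f g :: "real \<Rightarrow> real"
  assumes "f integrable_on S" "g integrable_on S"
    and "AE x in lebesgue. x \<in> S \<longrightarrow> f x \<le> g x"
  shows "integral S f \<le> integral S g"
proof -
  define N where "N = {x. \<not> (x \<in> S \<longrightarrow> f x \<le> g x)}"
  have N: "negligible N"
    using assms(3) unfolding N_def AE_lebesgue_iff_negligible .
  define h where "h x = (if x \<in> N then f x else g x)" for x
  have "h integrable_on S"
    by (rule integrable_spike[OF assms(2) N]) (simp add: h_def)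
  then have "integral S f \<le> integral S h"
    by (rule integral_le[OF assms(1)]) (auto simp: h_def N_def)
  also have "\<dots> = integral S g"
    by (rule integral_spike[OF N]) (simp add: h_def)
  finally show ?thesis .
qed

lemma integral_le_const_AE:
  fixes f :: "real \<Rightarrow> real"
  assumes "f integrable_on {p..q}" "p \<le> q"
    and "AE x in lebesgue. x \<in> {p..q} \<longrightarrow> f x \<le> K"
  shows "integral {p..q} f \<le> K * (q - p)"
  using integral_le_AE[OF assms(1) integrable_const_ivl assms(3)] assms(2) by (simp add: mult.commute)

lemma integral_diff_eq_if_AE_eq_outside:
  fixes f g :: "real \<Rightarrow> real"
  assumes "f integrable_on {A..B}" "g integrable_on {A..B}" "A \<le> a" "b \<le> B"
    and "AE x in lebesgue. x \<notin> {a..b} \<longrightarrow> f x = g x"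
  shows "integral {A..B} f - integral {A..B} g = integral {a..b} f - integral {a..b} g"
proof -
  have sub: "{a..b} \<subseteq> {A..B}"
    using assms(3,4) by auto
  from assms(5) have "AE x in lebesgue. x \<in> {A..B} \<longrightarrow>
      f x - g x = (if x \<in> {a..b} then f x - g x else 0)"
    by eventually_elim auto
  then have "integral {A..B} (\<lambda>x. f x - g x) = integral {A..B} (\<lambda>x. if x \<in> {a..b} then f x - g x else 0)"
    by (rule integral_eq_AE)
  also have "\<dots> = integral {a..b} (\<lambda>x. f x - g x)"
    by (simp only: integral_restrict_Int Int_absorb2[OF sub])
  moreover have "f integrable_on {a..b}" "g integrable_on {a..b}"
    using assms(1,2) integrable_on_subinterval[OF _ sub] by blast+
  ultimately show ?thesis
    using assms(1,2) by (simp add: integral_diff)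
qed

lemma Fen_le_Een:
  assumes "u \<in> Linfty_loc" "continuous_on UNIV W" "r > 0"
  shows "Fen r W a b u \<le> Een r W a b u"
proof -
  have "(\<lambda>x. (u (x + r) - u (x + - r))\<^sup>2) \<in> Linfty_loc"
    using assms(1) by (intro Linfty_loc_power2 Linfty_loc_diff Linfty_loc_translate)
  moreover have "(\<lambda>x. (osc_on {x - r<..<x + r} u)\<^sup>2) \<in> Linfty_loc"
    by (intro Linfty_loc_power2 Linfty_loc_osc_on_window assms)
  moreover from AE_abs_diff_endpoints_le_osc_on[OF assms(1,3)]
  have "AE x in lebesgue. x \<in> {a..b} \<longrightarrow> (u (x + r) - u (x - r))\<^sup>2 \<le> (osc_on {x - r<..<x + r} u)\<^sup>2"
    by eventually_elim (metis abs_ge_zero order_trans power2_le_iff_abs_le)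
  ultimately have "integral {a..b} (\<lambda>x. (u (x + r) - u (x - r))\<^sup>2)
      \<le> integral {a..b} (\<lambda>x. (osc_on {x - r<..<x + r} u)\<^sup>2)"
    by (intro integral_le_AE Linfty_loc_integrable_on) simp_all
  then show ?thesis
    unfolding Fen_eq_integral[OF assms(1,2)] Een_eq_integral[OF assms] by (simp add: divide_right_mono)
qed

lemma Fen_localize:
  assumes u: "u \<in> Linfty_loc" and v: "v \<in> Linfty_loc" and W: "continuous_on UNIV W"
    and "r > 0" "A \<le> a" "b \<le> B"
    and vu: "AE x in lebesgue. x \<notin> {a + r..b - r} \<longrightarrow> v x = u x"
  shows "Fen r W A B u - Fen r W A B v = Fen r W a b u - Fen r W a b v"
proof -
  define Fu Fv where "Fu x = (u (x + r) - u (x - r))\<^sup>2" and "Fv x = (v (x + r) - v (x - r))\<^sup>2" for x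
  have integrable: "(\<lambda>x. (w (x + r) - w (x - r))\<^sup>2) integrable_on {p..q}" if "w \<in> Linfty_loc" for w p q
    using Linfty_loc_translate[OF that, of "- r"] that
    by (intro Linfty_loc_integrable_on Linfty_loc_power2 Linfty_loc_diff Linfty_loc_translate) simp_all
  have "AE x in lebesgue. x \<notin> {a..b} \<longrightarrow> Fu x = Fv x \<and> W (u x) = W (v x)"
    using vu AE_lebesgue_translate[OF vu, of r] AE_lebesgue_translate[OF vu, of "- r"]
  proof eventually_elim
    case (elim x)
    show ?case
    proof
      assume "x \<notin> {a..b}"
      with \<open>r > 0\<close> have "x \<notin> {a + r..b - r}" "x + r \<notin> {a + r..b - r}" "x + - r \<notin> {a + r..b - r}"
        by auto
      with elim show "Fu x = Fv x \<and> W (u x) = W (v x)"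
        by (simp add: Fu_def Fv_def)
    qed
  qed
  then have "AE x in lebesgue. x \<notin> {a..b} \<longrightarrow> Fu x = Fv x"
    and "AE x in lebesgue. x \<notin> {a..b} \<longrightarrow> W (u x) = W (v x)"
    by (eventually_elim, blast)+
  moreover have "Fu integrable_on {A..B}" "Fv integrable_on {A..B}"
    unfolding Fu_def[abs_def] Fv_def[abs_def] using integrable u v by blast+
  ultimately have "integral {A..B} Fu - integral {A..B} Fv = integral {a..b} Fu - integral {a..b} Fv"
    and "integral {A..B} (\<lambda>x. W (u x)) - integral {A..B} (\<lambda>x. W (v x))
      = integral {a..b} (\<lambda>x. W (u x)) - integral {a..b} (\<lambda>x. W (v x))"
    using Linfty_loc_integrable_on[OF Linfty_loc_compose[OF u W]]
      Linfty_loc_integrable_on[OF Linfty_loc_compose[OF v W]] \<open>A \<le> a\<close> \<open>b \<le> B\<close>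
    by (blast intro: integral_diff_eq_if_AE_eq_outside)+
  moreover have "c * x1 + y1 - (c * x2 + y2) = c * (x1 - x2) + (y1 - y2)" for c x1 x2 y1 y2 :: real
    by (simp add: algebra_simps)
  ultimately show ?thesis
    unfolding Fen_eq_integral[OF u W] Fen_eq_integral[OF v W] Fu_def[abs_def] Fv_def[abs_def]
    by (simp only:)
qed

section \<open>Integrals over uniform grids\<close>

lemma integral_uniform_cells:
  fixes f :: "real \<Rightarrow> real" and p h :: real and n :: nat
  assumes "f integrable_on {p..p + h * n}" "0 \<le> h"
  shows "integral {p..p + h * n} f = (\<Sum>k<n. integral {p + h * k..p + h * Suc k} f)"
  using assms(1)
proof (induction n)
  case (Suc n)
  have le: "p \<le> p + h * n" "p + h * n \<le> p + h * Suc n"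
    using assms(2) by (simp_all add: mult_left_mono)
  then have "f integrable_on {p..p + h * n}"
    using Suc.prems by (elim integrable_on_subinterval) auto
  then show ?case
    using Henstock_Kurzweil_Integration.integral_combine[OF le Suc.prems] Suc.IH by simp
qed simp

lemma integral_le_tails_and_cells:
  fixes f :: "real \<Rightarrow> real" and h p :: real and n :: nat
  assumes f: "\<And>a b. f integrable_on {a..b}" and "0 \<le> h" "A \<le> p" "p + h * n \<le> B"
    and tails: "AE x in lebesgue. x \<in> {A..p} \<union> {p + h * n..B} \<longrightarrow> f x \<le> T"
    and cells: "\<And>k. k < n \<Longrightarrow> AE x in lebesgue. x \<in> {p + h * k..p + h * Suc k} \<longrightarrow> f x \<le> K k"
  shows "integral {A..B} f \<le> T * (B - A - h * n) + h * (\<Sum>k<n. K k)"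
proof -
  have "p \<le> p + h * n"
    using \<open>0 \<le> h\<close> by simp
  then have "integral {A..B} f = integral {A..p} f + integral {p..p + h * n} f + integral {p + h * n..B} f"
    using assms(3,4) f by (simp add: Henstock_Kurzweil_Integration.integral_combine)
  moreover from tails have "AE x in lebesgue. x \<in> {A..p} \<longrightarrow> f x \<le> T"
    and "AE x in lebesgue. x \<in> {p + h * n..B} \<longrightarrow> f x \<le> T"
    by (eventually_elim, simp)+
  then have "integral {A..p} f \<le> T * (p - A)" "integral {p + h * n..B} f \<le> T * (B - (p + h * n))"
    using integral_le_const_AE[OF f] assms(3,4) by blast+
  moreover have "integral {p + h * k..p + h * Suc k} f \<le> K k * h" if "k < n" for k
    using integral_le_const_AE[OF f _ cells[OF that]] \<open>0 \<le> h\<close> by (simp add: algebra_simps)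
  then have "integral {p..p + h * n} f \<le> h * (\<Sum>k<n. K k)"
    unfolding integral_uniform_cells[OF f \<open>0 \<le> h\<close>] sum_distrib_left
    by (intro sum_mono) (simp add: mult.commute)
  ultimately show ?thesis
    by (simp add: algebra_simps)
qed

lemma integral_sum_translates:
  fixes g :: "real \<Rightarrow> real" and h p :: real and n :: nat
  assumes g: "\<And>a b. g integrable_on {a..b}" and "0 \<le> h"
  shows "integral {0..h} (\<lambda>t. \<Sum>k<n. g (t + (p + h * k))) = integral {p..p + h * n} g"
proof -
  have shifted: "integral {0..h} (\<lambda>t. g (t + (p + h * k))) = integral {p + h * k..p + h * Suc k} g" for k
    using integral_shift_Icc_real[of 0 h g "p + h * k"] by (simp add: comp_def algebra_simps)
  have "(\<lambda>t. g (t + c)) integrable_on {0..h}" for c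
    using integrable_on_shift_Icc_real[of g c 0 h] g by (simp add: comp_def add.commute)
  then have "integral {0..h} (\<lambda>t. \<Sum>k<n. g (t + (p + h * k)))
      = (\<Sum>k<n. integral {0..h} (\<lambda>t. g (t + (p + h * k))))"
    by (intro Henstock_Kurzweil_Integration.integral_sum) auto
  also have "\<dots> = integral {p..p + h * n} g"
    unfolding shifted integral_uniform_cells[OF g \<open>0 \<le> h\<close>] ..
  finally show ?thesis .
qed

lemma integral_power2_translate_le:
  fixes g :: "real \<Rightarrow> real"
  assumes "g \<in> Linfty_loc" "0 \<le> e" "0 \<le> h"
    and "AE y in lebesgue. y \<in> {c..c + h} \<longrightarrow> \<bar>g y - s\<bar> \<le> e"
  shows "integral {0..h} (\<lambda>t. (g (t + c) - s)\<^sup>2) \<le> h * e\<^sup>2"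
proof -
  from AE_lebesgue_translate[OF assms(4), of c]
  have bound: "AE t in lebesgue. t \<in> {0..h} \<longrightarrow> (g (t + c) - s)\<^sup>2 \<le> e\<^sup>2"
    by eventually_elim (auto simp: power2_le_iff_abs_le[OF assms(2)])
  have "(\<lambda>t. (g (t + c) - s)\<^sup>2) integrable_on {0..h}"
    using Linfty_loc_diff[OF Linfty_loc_translate[OF assms(1)] Linfty_loc_const]
    by (intro Linfty_loc_integrable_on Linfty_loc_power2)
  from integral_le_const_AE[OF this assms(3) bound] show ?thesis
    by (simp add: mult.commute)
qed

section \<open>Staircase competitors\<close>

text \<open>
  For a shift \<open>t\<close>, \<open>staircase t\<close> takes the value
  \<open>sample k t = v (t + P + 2rk)\<close> on the cell \<open>[t + P + 2rk - r, t + P + 2rk + r)\<close>, \<open>k \<le> N\<close>, and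
  agrees with \<open>u\<close> elsewhere. For \<open>t \<in> [0, 2r]\<close> all cells lie in \<open>[A + r, B - r]\<close>.
\<close>

locale staircase_competitor =
  fixes r :: real and W u v :: "real \<Rightarrow> real" and a b M \<epsilon> \<eta> P :: real and N :: nat
  assumes r_pos: "0 < r"
    and W_cont: "continuous_on UNIV W" and W_nonneg: "\<And>s. 0 \<le> W s"
    and u: "u \<in> Linfty_loc" and v: "v \<in> Linfty_loc" and \<epsilon>_nonneg: "0 \<le> \<epsilon>"
    and u_left: "AE x in lebesgue. x < - M \<longrightarrow> \<bar>u x + 1\<bar> \<le> \<epsilon> \<and> W (u x) \<le> \<eta>"
    and u_right: "AE x in lebesgue. M < x \<longrightarrow> \<bar>u x - 1\<bar> \<le> \<epsilon> \<and> W (u x) \<le> \<eta>"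
    and v_eq_u: "AE x in lebesgue. x \<notin> {a + r..b - r} \<longrightarrow> v x = u x"
    and grid_left: "P + 2 * r < - M" "P + 2 * r < a"
    and grid_right: "M < P + 2 * r * N" "b \<le> P + 2 * r * N"
begin

definition "Q = P + 2 * r * N"
definition "A = P - 2 * r"
definition "B = Q + 4 * r"

definition sample :: "nat \<Rightarrow> real \<Rightarrow> real" where
  "sample k t = v (t + P + 2 * r * k)"

definition cell_index :: "real \<Rightarrow> real \<Rightarrow> nat" where
  "cell_index t y = nat \<lfloor>(y - (t + P - r)) / (2 * r)\<rfloor>"

definition staircase :: "real \<Rightarrow> real \<Rightarrow> real" where
  "staircase t y = (if t + P - r \<le> y \<and> y < t + Q + r then sample (cell_index t y) t else u y)"

lemma sample_Linfty: "(\<lambda>t. sample k t) \<in> Linfty_loc"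
  using Linfty_loc_translate[OF v, of "P + 2 * r * k"] by (simp add: sample_def add.assoc)

lemma cell_index_eq:
  assumes "t + P + 2 * r * k - r \<le> y" "y < t + P + 2 * r * k + r"
  shows "cell_index t y = k"
proof -
  have "real k \<le> (y - (t + P - r)) / (2 * r)" "(y - (t + P - r)) / (2 * r) < real k + 1"
    using assms r_pos by (simp_all add: field_simps)
  then have "\<lfloor>(y - (t + P - r)) / (2 * r)\<rfloor> = int k"
    by (intro floor_unique) simp_all
  then show ?thesis
    unfolding cell_index_def by simp
qed

lemma cell_index_le:
  assumes "t + P - r \<le> y" "y < t + Q + r"
  shows "cell_index t y \<le> N"
proof -
  have "(y - (t + P - r)) / (2 * r) < real N + 1"
    using assms r_pos by (simp add: Q_def field_simps)
  then show ?thesis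
    unfolding cell_index_def by linarith
qed

lemma staircase_on_cell:
  assumes "k \<le> N" "t + P + 2 * r * k - r \<le> y" "y < t + P + 2 * r * k + r"
  shows "staircase t y = sample k t"
proof -
  have "0 \<le> 2 * r * k" "2 * r * k \<le> 2 * r * N"
    using assms(1) r_pos by simp_all
  with assms(2,3) have "t + P - r \<le> y \<and> y < t + Q + r"
    unfolding Q_def by linarith
  with cell_index_eq[OF assms(2,3)] show ?thesis
    unfolding staircase_def by simp
qed

lemma staircase_eq_u: "y < t + P - r \<or> t + Q + r \<le> y \<Longrightarrow> staircase t y = u y"
  unfolding staircase_def by auto

lemma staircase_Linfty: "staircase t \<in> Linfty_loc"
proof (rule Linfty_locI)
  have "(\<lambda>y. (y - (t + P - r)) / (2 * r)) \<in> borel_measurable lebesgue"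
    using id_borel_measurable_lebesgue by (intro borel_measurable_divide borel_measurable_diff) (simp_all add: id_def)
  then have "(\<lambda>y. sample (cell_index t y) t) \<in> borel_measurable lebesgue"
    unfolding cell_index_def by (rule measurable_compose[OF measurable_compose[OF _ measurable_real_floor]]) simp
  moreover have "{y. t + P - r \<le> y \<and> y < t + Q + r} = {t + P - r..<t + Q + r}"
    by auto
  then have "{y. t + P - r \<le> y \<and> y < t + Q + r} \<in> sets lebesgue"
    by (simp add: sets_completionI_sets)
  ultimately show "staircase t \<in> borel_measurable lebesgue"
    unfolding staircase_def[abs_def] using Linfty_locD(1)[OF u]
    by (intro measurable_If) simp_all
  fix a' b'
  obtain C where C: "AE y in lebesgue. y \<in> {a'..b'} \<longrightarrow> \<bar>u y\<bar> \<le> C"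
    using Linfty_locD(2)[OF u] by blast
  have bound: "\<bar>staircase t y\<bar> \<le> \<bar>u y\<bar> + (\<Sum>k\<le>N. \<bar>sample k t\<bar>)" for y
  proof (cases "t + P - r \<le> y \<and> y < t + Q + r")
    case True
    then have "\<bar>staircase t y\<bar> \<le> (\<Sum>k\<le>N. \<bar>sample k t\<bar>)"
      unfolding staircase_def using cell_index_le[of t y]
      by (auto intro: member_le_sum)
    then show ?thesis by simp
  next
    case False
    then have "staircase t y = u y"
      unfolding staircase_def by (simp only: if_False)
    then show ?thesis
      by (simp add: sum_nonneg)
  qed
  from C have "AE y in lebesgue. y \<in> {a'..b'} \<longrightarrow> \<bar>staircase t y\<bar> \<le> C + (\<Sum>k\<le>N. \<bar>sample k t\<bar>)"
  proof eventually_elim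
    case (elim y)
    show ?case
      using elim bound[of y] by auto
  qed
  then show "\<exists>C. AE y in lebesgue. y \<in> {a'..b'} \<longrightarrow> \<bar>staircase t y\<bar> \<le> C" ..
qed

lemma osc_staircase_power2_le:
  assumes "\<And>y. y \<in> {x - r<..<x + r} \<Longrightarrow>
    staircase t y = d \<or> staircase t y = u y \<and> (y < - M \<and> s = - 1 \<or> M < y \<and> s = 1)"
  shows "(osc_on {x - r<..<x + r} (staircase t))\<^sup>2 \<le> (\<bar>d - s\<bar> + 2 * \<epsilon>)\<^sup>2"
proof -
  from u_left u_right
  have "AE y in lebesgue. y \<in> {x - r<..<x + r} \<longrightarrow> \<bar>staircase t y - s\<bar> \<le> \<epsilon> \<or> staircase t y = d"
  proof eventually_elim
    case (elim y)
    then show ?case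
      using assms[of y] by auto
  qed
  with osc_on_power2_le[OF staircase_Linfty _ \<epsilon>_nonneg] r_pos show ?thesis
    by simp
qed

lemma osc_staircase_power2_le_tails:
  assumes "0 \<le> t" "t \<le> 2 * r" "x \<le> t + P - 2 * r \<or> t + Q + 2 * r \<le> x"
  shows "(osc_on {x - r<..<x + r} (staircase t))\<^sup>2 \<le> (2 * \<epsilon>)\<^sup>2"
  using assms(3)
proof
  assume "x \<le> t + P - 2 * r"
  then have "staircase t y = u y \<and> y < - M" if "y \<in> {x - r<..<x + r}" for y
    using that assms(1,2) grid_left staircase_eq_u[of y t] by auto
  then show ?thesis
    using osc_staircase_power2_le[of x t "- 1" "- 1"] by auto
next
  assume "t + Q + 2 * r \<le> x"
  then have "staircase t y = u y \<and> M < y" if "y \<in> {x - r<..<x + r}" for y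
    using that assms(1,2) grid_right r_pos staircase_eq_u[of y t] unfolding Q_def by auto
  then show ?thesis
    using osc_staircase_power2_le[of x t 1 1] by auto
qed

lemma osc_staircase_power2_le_first_cell:
  assumes "0 \<le> t" "t \<le> 2 * r" "t + P - 2 * r \<le> x" "x \<le> t + P"
  shows "(osc_on {x - r<..<x + r} (staircase t))\<^sup>2 \<le> (\<bar>sample 0 t + 1\<bar> + 2 * \<epsilon>)\<^sup>2"
proof -
  have "staircase t y = sample 0 t \<or> staircase t y = u y \<and> y < - M" if "y \<in> {x - r<..<x + r}" for y
  proof (cases "y < t + P - r")
    case True
    then show ?thesis
      using staircase_eq_u[of y t] grid_left assms(1,2) by auto
  next
    case False
    then show ?thesis
      using staircase_on_cell[of 0 t y] that assms(4) by auto
  qed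
  then show ?thesis
    using osc_staircase_power2_le[of x t "sample 0 t" "- 1"] by auto
qed

lemma osc_staircase_power2_le_inner_cell:
  assumes "j < N" "t + P + 2 * r * j \<le> x" "x \<le> t + P + 2 * r * Suc j"
  shows "(osc_on {x - r<..<x + r} (staircase t))\<^sup>2 \<le> (sample (Suc j) t - sample j t)\<^sup>2"
proof -
  have "staircase t y = sample j t \<or> staircase t y = sample (Suc j) t" if "y \<in> {x - r<..<x + r}" for y
  proof (cases "y < t + P + 2 * r * j + r")
    case True
    then show ?thesis
      using staircase_on_cell[of j t y] that assms by (auto simp: algebra_simps)
  next
    case False
    then show ?thesis
      using staircase_on_cell[of "Suc j" t y] that assms by (auto simp: algebra_simps)
  qed
  then have "AE y in lebesgue. y \<in> {x - r<..<x + r} \<longrightarrow>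
      \<bar>staircase t y - sample j t\<bar> \<le> 0 \<or> staircase t y = sample (Suc j) t"
    by (intro AE_I2) auto
  from osc_on_power2_le[OF staircase_Linfty _ _ this] r_pos show ?thesis
    by simp
qed

lemma osc_staircase_power2_le_last_cell:
  assumes "0 \<le> t" "t \<le> 2 * r" "t + Q \<le> x" "x \<le> t + Q + 2 * r"
  shows "(osc_on {x - r<..<x + r} (staircase t))\<^sup>2 \<le> (\<bar>sample N t - 1\<bar> + 2 * \<epsilon>)\<^sup>2"
proof -
  have "staircase t y = sample N t \<or> staircase t y = u y \<and> M < y" if "y \<in> {x - r<..<x + r}" for y
  proof (cases "y < t + Q + r")
    case True
    then show ?thesis
      using staircase_on_cell[of N t y] that assms(3) unfolding Q_def by (auto simp: algebra_simps)
  next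
    case False
    then show ?thesis
      using staircase_eq_u[of y t] grid_right assms(1,2) r_pos unfolding Q_def by auto
  qed
  then show ?thesis
    using osc_staircase_power2_le[of x t "sample N t" 1] by auto
qed

text \<open>
  A window of length \<open>2r\<close> centred in the \<open>k\<close>-th cell of the grid \<open>t + P - 2r + 2r\<nat>\<close> only sees
  the samples \<open>k - 1\<close> and \<open>k\<close>; in the two outermost cells one of them is replaced by the tail
  value \<open>\<mp>1\<close> of \<open>u\<close>.
\<close>

definition osc_cell_bound :: "real \<Rightarrow> nat \<Rightarrow> real" where
  "osc_cell_bound t k = (if k = 0 then (\<bar>sample 0 t + 1\<bar> + 2 * \<epsilon>)\<^sup>2
     else if k = Suc N then (\<bar>sample N t - 1\<bar> + 2 * \<epsilon>)\<^sup>2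
     else (sample k t - sample (k - 1) t)\<^sup>2)"

lemma osc_staircase_power2_le_cell:
  assumes t: "0 \<le> t" "t \<le> 2 * r" and "k \<le> Suc N"
    and x: "t + P - 2 * r + 2 * r * k \<le> x" "x \<le> t + P + 2 * r * k"
  shows "(osc_on {x - r<..<x + r} (staircase t))\<^sup>2 \<le> osc_cell_bound t k"
proof (cases k)
  case 0
  with x t show ?thesis
    using osc_staircase_power2_le_first_cell[of t x] by (simp add: osc_cell_bound_def)
next
  case (Suc j)
  show ?thesis
  proof (cases "j < N")
    case True
    from x Suc have "t + P + 2 * r * j \<le> x" "x \<le> t + P + 2 * r * Suc j"
      by (simp_all add: algebra_simps)
    with True Suc show ?thesis
      using osc_staircase_power2_le_inner_cell[of j t x] by (simp add: osc_cell_bound_def)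
  next
    case False
    with \<open>k \<le> Suc N\<close> Suc have "k = Suc N"
      by simp
    with x have "t + Q \<le> x" "x \<le> t + Q + 2 * r"
      unfolding Q_def by (simp_all add: algebra_simps)
    with \<open>k = Suc N\<close> t show ?thesis
      using osc_staircase_power2_le_last_cell[of t x] by (simp add: osc_cell_bound_def)
  qed
qed

lemma sum_osc_cell_bound:
  "(\<Sum>k<Suc (Suc N). osc_cell_bound t k) = (\<bar>sample 0 t + 1\<bar> + 2 * \<epsilon>)\<^sup>2
     + (\<Sum>k<N. (sample (Suc k) t - sample k t)\<^sup>2) + (\<bar>sample N t - 1\<bar> + 2 * \<epsilon>)\<^sup>2"
proof -
  have "(\<Sum>k<N. osc_cell_bound t (Suc k)) = (\<Sum>k<N. (sample (Suc k) t - sample k t)\<^sup>2)"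
    by (rule sum.cong) (simp_all add: osc_cell_bound_def)
  then show ?thesis
    unfolding sum.lessThan_Suc_shift[of _ "Suc N"] sum.lessThan_Suc[of "\<lambda>k. osc_cell_bound t (Suc k)" N]
    by (simp add: osc_cell_bound_def)
qed

lemma integral_osc_staircase_le:
  assumes t: "0 \<le> t" "t \<le> 2 * r"
  shows "integral {A..B} (\<lambda>x. (osc_on {x - r<..<x + r} (staircase t))\<^sup>2)
    \<le> 8 * r * \<epsilon>\<^sup>2 + 2 * r * ((\<bar>sample 0 t + 1\<bar> + 2 * \<epsilon>)\<^sup>2
      + (\<Sum>k<N. (sample (Suc k) t - sample k t)\<^sup>2) + (\<bar>sample N t - 1\<bar> + 2 * \<epsilon>)\<^sup>2)"
proof -
  have "integral {A..B} (\<lambda>x. (osc_on {x - r<..<x + r} (staircase t))\<^sup>2)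
      \<le> (2 * \<epsilon>)\<^sup>2 * (B - A - 2 * r * real (Suc (Suc N))) + 2 * r * (\<Sum>k<Suc (Suc N). osc_cell_bound t k)"
  proof (rule integral_le_tails_and_cells[where p = "t + P - 2 * r"])
    show "(\<lambda>x. (osc_on {x - r<..<x + r} (staircase t))\<^sup>2) integrable_on {a..b}" for a b
      by (intro Linfty_loc_integrable_on Linfty_loc_power2 Linfty_loc_osc_on_window staircase_Linfty r_pos)
    show "0 \<le> 2 * r" "A \<le> t + P - 2 * r" "t + P - 2 * r + 2 * r * real (Suc (Suc N)) \<le> B"
      using t r_pos unfolding A_def B_def Q_def by (simp_all add: algebra_simps)
    show "AE x in lebesgue. x \<in> {A..t + P - 2 * r} \<union> {t + P - 2 * r + 2 * r * real (Suc (Suc N))..B} \<longrightarrow>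
        (osc_on {x - r<..<x + r} (staircase t))\<^sup>2 \<le> (2 * \<epsilon>)\<^sup>2"
      using osc_staircase_power2_le_tails[OF t] unfolding Q_def by (intro AE_I2) (auto simp: algebra_simps)
    show "AE x in lebesgue. x \<in> {t + P - 2 * r + 2 * r * real k..t + P - 2 * r + 2 * r * real (Suc k)} \<longrightarrow>
        (osc_on {x - r<..<x + r} (staircase t))\<^sup>2 \<le> osc_cell_bound t k" if "k < Suc (Suc N)" for k
      using osc_staircase_power2_le_cell[OF t, of k] that by (intro AE_I2) (auto simp: algebra_simps)
  qed
  moreover have "(2 * \<epsilon>)\<^sup>2 * (B - A - 2 * r * real (Suc (Suc N))) = 8 * r * \<epsilon>\<^sup>2"
    unfolding A_def B_def Q_def by (simp add: algebra_simps power2_eq_square)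
  ultimately show ?thesis
    unfolding sum_osc_cell_bound by (simp only:)
qed

lemma integral_W_staircase_le:
  assumes t: "0 \<le> t" "t \<le> 2 * r"
  shows "integral {A..B} (\<lambda>x. W (staircase t x)) \<le> 4 * r * \<eta> + 2 * r * (\<Sum>k<Suc N. W (sample k t))"
proof -
  have "integral {A..B} (\<lambda>x. W (staircase t x))
      \<le> \<eta> * (B - A - 2 * r * real (Suc N)) + 2 * r * (\<Sum>k<Suc N. W (sample k t))"
  proof (rule integral_le_tails_and_cells[where p = "t + P - r"])
    show "(\<lambda>x. W (staircase t x)) integrable_on {a..b}" for a b
      by (rule Linfty_loc_integrable_on[OF Linfty_loc_compose[OF staircase_Linfty W_cont]])
    show "0 \<le> 2 * r" "A \<le> t + P - r" "t + P - r + 2 * r * real (Suc N) \<le> B"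
      using t r_pos unfolding A_def B_def Q_def by (simp_all add: algebra_simps)
    show "AE x in lebesgue. x \<in> {A..t + P - r} \<union> {t + P - r + 2 * r * real (Suc N)..B} \<longrightarrow>
        W (staircase t x) \<le> \<eta>"
      using u_left u_right AE_lebesgue_neq[of "t + P - r"]
    proof eventually_elim
      case (elim x)
      show ?case
      proof
        assume "x \<in> {A..t + P - r} \<union> {t + P - r + 2 * r * real (Suc N)..B}"
        then have "x < t + P - r \<and> x < - M \<or> t + Q + r \<le> x \<and> M < x"
          using elim(3) t grid_left grid_right unfolding Q_def by (auto simp: algebra_simps)
        with elim(1,2) show "W (staircase t x) \<le> \<eta>"
          using staircase_eq_u[of x t] by auto
      qed
    qed
    fix k assume k: "k < Suc N"
    show "AE x in lebesgue. x \<in> {t + P - r + 2 * r * real k..t + P - r + 2 * r * real (Suc k)} \<longrightarrow>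
        W (staircase t x) \<le> W (sample k t)"
      using AE_lebesgue_neq[of "t + P - r + 2 * r * real (Suc k)"]
    proof eventually_elim
      case (elim x)
      with k show ?case
        using staircase_on_cell[of k t x] by (auto simp: algebra_simps)
    qed
  qed
  then show ?thesis
    unfolding A_def B_def Q_def by (simp add: algebra_simps)
qed

definition staircase_bound :: "real \<Rightarrow> real" where
  "staircase_bound t = (20 * \<epsilon>\<^sup>2 + 2 * (sample 0 t + 1)\<^sup>2 + (\<Sum>k<N. (sample (Suc k) t - sample k t)\<^sup>2)
     + 2 * (sample N t - 1)\<^sup>2) / r + 4 * r * \<eta> + 2 * r * (\<Sum>k<Suc N. W (sample k t))"

lemma Een_le_staircase_bound:
  assumes local_min: "local_minimizer (Een r W) r u" and t: "0 \<le> t" "t \<le> 2 * r"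
  shows "Een r W A B u \<le> staircase_bound t"
proof -
  have "0 \<le> 2 * r * N"
    using r_pos by simp
  then have "A < B"
    unfolding A_def B_def Q_def using r_pos by linarith
  moreover have "staircase t x = u x" if "x \<notin> {A + r..B - r}" for x
    using that t by (intro staircase_eq_u) (auto simp: A_def B_def)
  ultimately have "Een r W A B u \<le> Een r W A B (staircase t)"
    using local_min staircase_Linfty unfolding local_minimizer_def by (simp add: AE_I2)
  also have "\<dots> \<le> staircase_bound t"
  proof -
    have square: "(\<bar>z\<bar> + 2 * \<epsilon>)\<^sup>2 \<le> 2 * z\<^sup>2 + 8 * \<epsilon>\<^sup>2" for z
    proof -
      have "0 \<le> (\<bar>z\<bar> - 2 * \<epsilon>)\<^sup>2"
        by simp
      then show ?thesis
        by (simp add: power2_eq_square algebra_simps)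
    qed
    define Z where "Z = 20 * \<epsilon>\<^sup>2 + 2 * (sample 0 t + 1)\<^sup>2 + (\<Sum>k<N. (sample (Suc k) t - sample k t)\<^sup>2)
      + 2 * (sample N t - 1)\<^sup>2"
    have "(\<bar>sample 0 t + 1\<bar> + 2 * \<epsilon>)\<^sup>2 + (\<Sum>k<N. (sample (Suc k) t - sample k t)\<^sup>2)
        + (\<bar>sample N t - 1\<bar> + 2 * \<epsilon>)\<^sup>2 \<le> Z - 4 * \<epsilon>\<^sup>2"
      using square[of "sample 0 t + 1"] square[of "sample N t - 1"] unfolding Z_def by linarith
    from mult_left_mono[OF this, of "2 * r"] integral_osc_staircase_le[OF t] r_pos
    have "integral {A..B} (\<lambda>x. (osc_on {x - r<..<x + r} (staircase t))\<^sup>2) \<le> 2 * r * Z"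
      by (simp add: algebra_simps)
    then have "1 / (2 * r\<^sup>2) * integral {A..B} (\<lambda>x. (osc_on {x - r<..<x + r} (staircase t))\<^sup>2) \<le> Z / r"
      using r_pos by (simp add: field_simps power2_eq_square)
    with integral_W_staircase_le[OF t] show ?thesis
      unfolding Een_eq_integral[OF staircase_Linfty W_cont r_pos] staircase_bound_def Z_def by linarith
  qed
  finally show ?thesis .
qed

lemma integral_first_sample_le: "integral {0..2 * r} (\<lambda>t. (sample 0 t + 1)\<^sup>2) \<le> 2 * r * \<epsilon>\<^sup>2"
proof -
  from v_eq_u u_left have "AE y in lebesgue. y \<in> {P..P + 2 * r} \<longrightarrow> \<bar>v y - - 1\<bar> \<le> \<epsilon>"
    by eventually_elim (use grid_left r_pos in auto)
  from integral_power2_translate_le[OF v \<epsilon>_nonneg _ this] r_pos show ?thesis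
    by (simp add: sample_def)
qed

lemma integral_last_sample_le: "integral {0..2 * r} (\<lambda>t. (sample N t - 1)\<^sup>2) \<le> 2 * r * \<epsilon>\<^sup>2"
proof -
  from v_eq_u u_right have "AE y in lebesgue. y \<in> {Q..Q + 2 * r} \<longrightarrow> \<bar>v y - 1\<bar> \<le> \<epsilon>"
    by eventually_elim (use grid_right r_pos in \<open>auto simp: Q_def\<close>)
  from integral_power2_translate_le[OF v \<epsilon>_nonneg _ this] r_pos show ?thesis
    by (simp add: sample_def Q_def algebra_simps)
qed

lemma integral_sample_increments_le:
  "integral {0..2 * r} (\<lambda>t. \<Sum>k<N. (sample (Suc k) t - sample k t)\<^sup>2)
    \<le> integral {A..B} (\<lambda>x. (v (x + r) - v (x - r))\<^sup>2)"
proof -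
  define g where "g y = (v (y + 2 * r) - v y)\<^sup>2" for y
  define G where "G x = (v (x + r) - v (x - r))\<^sup>2" for x
  have g: "g \<in> Linfty_loc"
    unfolding g_def[abs_def] by (intro Linfty_loc_power2 Linfty_loc_diff Linfty_loc_translate v)
  have G: "G \<in> Linfty_loc"
    using Linfty_loc_diff[OF Linfty_loc_translate[OF v, of r] Linfty_loc_translate[OF v, of "- r"]]
    unfolding G_def[abs_def] by (intro Linfty_loc_power2) simp
  have "integral {0..2 * r} (\<lambda>t. \<Sum>k<N. (sample (Suc k) t - sample k t)\<^sup>2)
      = integral {0..2 * r} (\<lambda>t. \<Sum>k<N. g (t + (P + 2 * r * k)))"
    by (simp add: sample_def g_def algebra_simps)
  also have "\<dots> = integral {P..Q} g"
    unfolding Q_def using g r_pos by (intro integral_sum_translates Linfty_loc_integrable_on) simp_all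
  also have "\<dots> = integral {P + r..Q + r} G"
  proof -
    have "g \<circ> (+) (- r) = G"
      by (simp add: fun_eq_iff g_def G_def algebra_simps)
    then show ?thesis
      using integral_shift_Icc_real[of "P + r" "Q + r" g "- r"] by simp
  qed
  also have "\<dots> \<le> integral {A..B} G"
    using G r_pos unfolding A_def B_def
    by (intro integral_subset_le Linfty_loc_integrable_on) (auto simp: G_def)
  finally show ?thesis
    unfolding G_def .
qed

lemma integral_sample_W_le:
  "integral {0..2 * r} (\<lambda>t. \<Sum>k<Suc N. W (sample k t)) \<le> integral {A..B} (\<lambda>x. W (v x))"
proof -
  have Wv: "(\<lambda>x. W (v x)) \<in> Linfty_loc"
    by (rule Linfty_loc_compose[OF v W_cont])
  have "integral {0..2 * r} (\<lambda>t. \<Sum>k<Suc N. W (sample k t))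
      = integral {P..P + 2 * r * real (Suc N)} (\<lambda>x. W (v x))"
    unfolding sample_def using Wv r_pos
    by (subst integral_sum_translates[symmetric]) (simp_all add: Linfty_loc_integrable_on algebra_simps)
  also have "\<dots> \<le> integral {A..B} (\<lambda>x. W (v x))"
    using Wv r_pos W_nonneg unfolding A_def B_def Q_def
    by (intro integral_subset_le Linfty_loc_integrable_on) (auto simp: algebra_simps)
  finally show ?thesis .
qed

lemma staircase_bound_has_integral_le:
  obtains I where "(staircase_bound has_integral I) {0..2 * r}"
    and "I \<le> 2 * r * (Fen r W A B v + 24 * \<epsilon>\<^sup>2 / r + 4 * r * \<eta>)"
proof -
  define f0 f1 fN f2 where "f0 t = (sample 0 t + 1)\<^sup>2"
    and "f1 t = (\<Sum>k<N. (sample (Suc k) t - sample k t)\<^sup>2)"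
    and "fN t = (sample N t - 1)\<^sup>2" and "f2 t = (\<Sum>k<Suc N. W (sample k t))" for t
  have "f0 \<in> Linfty_loc" "f1 \<in> Linfty_loc" "fN \<in> Linfty_loc" "f2 \<in> Linfty_loc"
    unfolding f0_def[abs_def] f1_def[abs_def] fN_def[abs_def] f2_def[abs_def]
    using sample_Linfty Linfty_loc_compose[OF sample_Linfty W_cont]
    by (auto intro!: Linfty_loc_power2 Linfty_loc_add Linfty_loc_diff Linfty_loc_sum Linfty_loc_const)
  then have int: "f0 integrable_on {0..2 * r}" "f1 integrable_on {0..2 * r}"
    "fN integrable_on {0..2 * r}" "f2 integrable_on {0..2 * r}"
    by (simp_all add: Linfty_loc_integrable_on)
  have "((\<lambda>t. c) has_integral (2 * r * c)) {0..2 * r}" for c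
    using has_integral_const_real[of c 0 "2 * r"] r_pos by simp
  then have "((\<lambda>t. (20 * \<epsilon>\<^sup>2 + 2 * f0 t + f1 t + 2 * fN t) / r + 4 * r * \<eta> + 2 * r * f2 t) has_integral
      (2 * r * (20 * \<epsilon>\<^sup>2) + 2 * integral {0..2 * r} f0 + integral {0..2 * r} f1
        + 2 * integral {0..2 * r} fN) / r + 2 * r * (4 * r * \<eta>) + 2 * r * integral {0..2 * r} f2)
      {0..2 * r}"
    using int by (intro has_integral_add has_integral_divide has_integral_mult_right integrable_integral)
  moreover have "staircase_bound = (\<lambda>t. (20 * \<epsilon>\<^sup>2 + 2 * f0 t + f1 t + 2 * fN t) / r + 4 * r * \<eta> + 2 * r * f2 t)"
    by (simp add: fun_eq_iff staircase_bound_def f0_def f1_def fN_def f2_def)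
  moreover have "(2 * r * (20 * \<epsilon>\<^sup>2) + 2 * integral {0..2 * r} f0 + integral {0..2 * r} f1
        + 2 * integral {0..2 * r} fN) / r + 2 * r * (4 * r * \<eta>) + 2 * r * integral {0..2 * r} f2
      \<le> (2 * r * (20 * \<epsilon>\<^sup>2) + 2 * (2 * r * \<epsilon>\<^sup>2)
        + integral {A..B} (\<lambda>x. (v (x + r) - v (x - r))\<^sup>2) + 2 * (2 * r * \<epsilon>\<^sup>2)) / r
        + 2 * r * (4 * r * \<eta>) + 2 * r * integral {A..B} (\<lambda>x. W (v x))"
    using integral_first_sample_le integral_last_sample_le integral_sample_increments_le integral_sample_W_le r_pos
    unfolding f0_def[abs_def] f1_def[abs_def] fN_def[abs_def] f2_def[abs_def]
    by (intro add_mono divide_right_mono mult_left_mono order_refl) simp_all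
  moreover have "\<dots> = 2 * r * (Fen r W A B v + 24 * \<epsilon>\<^sup>2 / r + 4 * r * \<eta>)"
    unfolding Fen_eq_integral[OF v W_cont] using r_pos by (simp add: field_simps power2_eq_square)
  ultimately show ?thesis
    using that by auto
qed

lemma Een_le_Fen_add:
  assumes "local_minimizer (Een r W) r u"
  shows "Een r W A B u \<le> Fen r W A B v + 24 * \<epsilon>\<^sup>2 / r + 4 * r * \<eta>"
proof -
  obtain I where I: "(staircase_bound has_integral I) {0..2 * r}"
    and "I \<le> 2 * r * (Fen r W A B v + 24 * \<epsilon>\<^sup>2 / r + 4 * r * \<eta>)"
    by (rule staircase_bound_has_integral_le)
  moreover have "((\<lambda>t. Een r W A B u) has_integral 2 * r * Een r W A B u) {0..2 * r}"
    using has_integral_const_real[of "Een r W A B u" 0 "2 * r"] r_pos by simp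
  then have "2 * r * Een r W A B u \<le> I"
    by (rule has_integral_le[OF _ I]) (use Een_le_staircase_bound[OF assms] in auto)
  ultimately have "2 * r * Een r W A B u \<le> 2 * r * (Fen r W A B v + 24 * \<epsilon>\<^sup>2 / r + 4 * r * \<eta>)"
    by linarith
  then show ?thesis
    using r_pos by (simp add: mult_le_cancel_left_pos)
qed

lemma Fen_le_Fen_add:
  assumes "local_minimizer (Een r W) r u"
  shows "Fen r W a b u \<le> Fen r W a b v + 24 * \<epsilon>\<^sup>2 / r + 4 * r * \<eta>"
proof -
  have "A \<le> a" "b \<le> B"
    using grid_left grid_right r_pos unfolding A_def B_def Q_def by simp_all
  then have "Fen r W A B u - Fen r W A B v = Fen r W a b u - Fen r W a b v"
    by (rule Fen_localize[OF u v W_cont r_pos _ _ v_eq_u])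
  moreover have "Fen r W A B u \<le> Een r W A B u"
    by (rule Fen_le_Een[OF u W_cont r_pos])
  ultimately show ?thesis
    using Een_le_Fen_add[OF assms] by linarith
qed

end

section \<open>Choice of the parameters\<close>

lemma exists_staircase_grid:
  fixes r a b M :: real
  assumes "r > 0"
  obtains P :: real and N :: nat
  where "P + 2 * r < - M" "P + 2 * r < a" "M < P + 2 * r * N" "b \<le> P + 2 * r * N"
proof -
  define P where "P = min a (- M) - 2 * r - 1"
  obtain N :: nat where "(max b M + 1 - P) / (2 * r) < N"
    using reals_Archimedean2 by blast
  then have "max b M + 1 - P < 2 * r * N"
    using assms by (simp add: pos_divide_less_eq mult.commute)
  then show ?thesis
    using that[of P N] unfolding P_def by linarith
qed

lemma exists_tail_bounds:
  fixes u W :: "real \<Rightarrow> real"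
  assumes W: "continuous_on UNIV W" "W 1 = 0" "W (- 1) = 0" and "\<eta> > 0" "\<epsilon>0 > 0"
    and u_right: "\<forall>e>0. \<exists>M. AE x in lebesgue. x > M \<longrightarrow> \<bar>u x - 1\<bar> < e"
    and u_left: "\<forall>e>0. \<exists>M. AE x in lebesgue. x < M \<longrightarrow> \<bar>u x + 1\<bar> < e"
  obtains \<epsilon> M where "0 < \<epsilon>" "\<epsilon> \<le> \<epsilon>0"
    "AE x in lebesgue. x < - M \<longrightarrow> \<bar>u x + 1\<bar> \<le> \<epsilon> \<and> W (u x) \<le> \<eta>"
    "AE x in lebesgue. M < x \<longrightarrow> \<bar>u x - 1\<bar> \<le> \<epsilon> \<and> W (u x) \<le> \<eta>"
proof -
  obtain d1 where d1: "d1 > 0" "\<And>s. dist s 1 < d1 \<Longrightarrow> dist (W s) (W 1) < \<eta>"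
    using W(1) \<open>\<eta> > 0\<close> unfolding continuous_on_iff by (meson UNIV_I)
  obtain d2 where d2: "d2 > 0" "\<And>s. dist s (- 1) < d2 \<Longrightarrow> dist (W s) (W (- 1)) < \<eta>"
    using W(1) \<open>\<eta> > 0\<close> unfolding continuous_on_iff by (meson UNIV_I)
  define \<epsilon> where "\<epsilon> = min \<epsilon>0 (min d1 d2 / 2)"
  have \<epsilon>: "0 < \<epsilon>" "\<epsilon> \<le> \<epsilon>0"
    using d1(1) d2(1) \<open>\<epsilon>0 > 0\<close> unfolding \<epsilon>_def by simp_all
  have W_small: "W s \<le> \<eta>" if "\<bar>s - 1\<bar> \<le> \<epsilon> \<or> \<bar>s + 1\<bar> \<le> \<epsilon>" for s
  proof -
    from that have "dist s 1 < d1 \<or> dist s (- 1) < d2"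
      using d1(1) d2(1) unfolding \<epsilon>_def dist_real_def by auto
    then show ?thesis
      using d1(2)[of s] d2(2)[of s] W(2,3) by (auto simp: dist_real_def)
  qed
  obtain M1 M2 where "AE x in lebesgue. x > M1 \<longrightarrow> \<bar>u x - 1\<bar> < \<epsilon>"
    and "AE x in lebesgue. x < M2 \<longrightarrow> \<bar>u x + 1\<bar> < \<epsilon>"
    using u_right u_left \<epsilon>(1) by blast
  then have "AE x in lebesgue. x < - max M1 (- M2) \<longrightarrow> \<bar>u x + 1\<bar> \<le> \<epsilon> \<and> W (u x) \<le> \<eta>"
    and "AE x in lebesgue. max M1 (- M2) < x \<longrightarrow> \<bar>u x - 1\<bar> \<le> \<epsilon> \<and> W (u x) \<le> \<eta>"
    by (eventually_elim, use W_small in auto)+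
  with \<epsilon> show ?thesis
    by (rule that)
qed

lemma Fen_le_Fen_add_of_Een_local_minimizer:
  fixes r :: real and W u v :: "real \<Rightarrow> real"
  assumes "r > 0"
    and W: "continuous_on UNIV W" "\<And>s. 0 \<le> W s" "W 1 = 0" "W (- 1) = 0"
    and u: "u \<in> Linfty_loc" and local_min: "local_minimizer (Een r W) r u"
    and u_right: "\<forall>e>0. \<exists>M. AE x in lebesgue. x > M \<longrightarrow> \<bar>u x - 1\<bar> < e"
    and u_left: "\<forall>e>0. \<exists>M. AE x in lebesgue. x < M \<longrightarrow> \<bar>u x + 1\<bar> < e"
    and v: "v \<in> Linfty_loc" and v_eq_u: "AE x in lebesgue. x \<notin> {a + r..b - r} \<longrightarrow> v x = u x"
    and "e > 0"
  shows "Fen r W a b u \<le> Fen r W a b v + e"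
proof -
  define \<eta> where "\<eta> = e / (8 * r)"
  have "\<eta> > 0" "0 < min 1 (e * r / 48)"
    using \<open>r > 0\<close> \<open>e > 0\<close> by (simp_all add: \<eta>_def)
  then obtain \<epsilon> M where \<epsilon>: "0 < \<epsilon>" "\<epsilon> \<le> min 1 (e * r / 48)"
    and tails: "AE x in lebesgue. x < - M \<longrightarrow> \<bar>u x + 1\<bar> \<le> \<epsilon> \<and> W (u x) \<le> \<eta>"
      "AE x in lebesgue. M < x \<longrightarrow> \<bar>u x - 1\<bar> \<le> \<epsilon> \<and> W (u x) \<le> \<eta>"
    by (rule exists_tail_bounds[OF W(1,3,4) _ _ u_right u_left])
  obtain P and N :: nat
    where grid: "P + 2 * r < - M" "P + 2 * r < a" "M < P + 2 * r * N" "b \<le> P + 2 * r * N"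
    by (rule exists_staircase_grid[OF \<open>r > 0\<close>])
  interpret staircase_competitor r W u v a b M \<epsilon> \<eta> P N
    by unfold_locales (use \<open>r > 0\<close> W u v v_eq_u \<epsilon> tails grid in auto)
  have "\<epsilon>\<^sup>2 \<le> \<epsilon>"
    using mult_left_le[of \<epsilon> \<epsilon>] \<epsilon> by (simp add: power2_eq_square)
  with \<epsilon> have "\<epsilon>\<^sup>2 \<le> e * r / 48"
    by linarith
  then have "24 * \<epsilon>\<^sup>2 / r \<le> e / 2"
    using \<open>r > 0\<close> by (simp add: pos_divide_le_eq)
  moreover have "4 * r * \<eta> = e / 2"
    using \<open>r > 0\<close> by (simp add: \<eta>_def)
  ultimately show ?thesis
    using Fen_le_Fen_add[OF local_min] by linarith
qed

theorem proposition4p2: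
  fixes r :: real and W u :: "real \<Rightarrow> real"
  assumes "r > 0"
    and "hyp_H W"
    and "u \<in> Linfty_loc"
    and "local_minimizer (Een r W) r u"
    and "\<forall>e>0. \<exists>M. AE x in lebesgue. x > M \<longrightarrow> \<bar>u x - 1\<bar> < e"
    and "\<forall>e>0. \<exists>M. AE x in lebesgue. x < M \<longrightarrow> \<bar>u x + 1\<bar> < e"
  shows "local_minimizer (Fen r W) r u"
proof -
  have W: "continuous_on UNIV W" "W 1 = 0" "W (- 1) = 0"
    and W_pos: "\<And>s. s \<noteq> 1 \<and> s \<noteq> - 1 \<Longrightarrow> W s > 0"
    using assms(2) unfolding hyp_H_def by auto
  have W_nonneg: "0 \<le> W s" for s
    using W_pos[of s] W(2,3) by (cases "s = 1 \<or> s = - 1") auto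
  show ?thesis
    unfolding local_minimizer_def
  proof (intro allI impI)
    fix a b v
    assume "a < b" and v: "v \<in> Linfty_loc" "AE x in lebesgue. x \<notin> {a + r..b - r} \<longrightarrow> v x = u x"
    show "Fen r W a b u \<le> Fen r W a b v"
      by (rule field_le_epsilon, rule Fen_le_Fen_add_of_Een_local_minimizer)
        (use assms W W_nonneg v in auto)
  qed
qed

end
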